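(* Let $f_1,\dots,f_k\in\mathcal{C}_n$ and $\varphi\in\mathcal{C}_k$. Then the function $f:\Gamma_+^{(n)}\to\mathbb{R}$ defined by $f(x_1,\dots,x_n)=\varphi\big(f_1(x_1,\dots,x_n),\dots,f_k(x_1,\dots,x_n)\big)$ belongs to $\mathcal{C}_n$. If moreover $f_1,\dots,f_k\in\mathcal{S}_n$, then $f\in\mathcal{S}_n$.
   Context: For $m\ge1$, $\Gamma_+^{(m)}=\{x\in\mathbb{R}^m: x_i>0\ \forall i\}$. $\mathcal{C}_m$ is the class of functions $g:\Gamma_+^{(m)}\to\mathbb{R}$ which are $C^\infty$, homogeneous of degree one ($g(cx)=cg(x)$ for $c>0$), strictly monotone increasing ($\partial g/\partial x_i>0$ for each $i$), concave, and inverse-concave, meaning $g^*(x_1,\dots,x_m)=-g(x_1^{-1},\dots,x_m^{-1})$ is concave on $\Gamma_+^{(m)}$. $\mathcal{S}_m$ is the subclass of symmetric functions (invariant under permutations of the arguments) in $\mathcal{C}_m$. (Functions in $\mathcal{C}_m$ take positive values, so the composition is defined.) *)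

theory Defs
  imports "HOL-Analysis.Analysis"
begin

definition pos_orthant :: "(real ^ 'n) set" where
  "pos_orthant = {x. \<forall>i. x $ i > 0}"

definition partial_deriv :: "(real ^ 'n \<Rightarrow> real) \<Rightarrow> 'n \<Rightarrow> real ^ 'n \<Rightarrow> real" where
  "partial_deriv g i x = frechet_derivative g (at x) (axis i 1)"

fun ck_on :: "nat \<Rightarrow> (real ^ 'n) set \<Rightarrow> (real ^ 'n \<Rightarrow> real) \<Rightarrow> bool" where
  "ck_on 0 S g = continuous_on S g"
| "ck_on (Suc m) S g =
     ((\<forall>x\<in>S. g differentiable (at x)) \<and> (\<forall>i. ck_on m S (partial_deriv g i)))"

definition smooth_on :: "(real ^ 'n) set \<Rightarrow> (real ^ 'n \<Rightarrow> real) \<Rightarrow> bool" where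
  "smooth_on S g \<longleftrightarrow> (\<forall>m. ck_on m S g)"

text \<open>The class C_m (here m = CARD('n)).\<close>
definition class_C :: "(real ^ 'n \<Rightarrow> real) \<Rightarrow> bool" where
  "class_C g \<longleftrightarrow>
     smooth_on pos_orthant g
   \<and> (\<forall>c>0. \<forall>x\<in>pos_orthant. g (c *\<^sub>R x) = c * g x)
   \<and> (\<forall>x\<in>pos_orthant. \<forall>i. partial_deriv g i x > 0)
   \<and> concave_on pos_orthant g
   \<and> concave_on pos_orthant (\<lambda>x. - g (\<chi> i. inverse (x $ i)))"

definition class_S :: "(real ^ 'n \<Rightarrow> real) \<Rightarrow> bool" where
  "class_S g \<longleftrightarrow> class_C g \<and>
     (\<forall>p x. p permutes (UNIV :: 'n set) \<longrightarrow> x \<in> pos_orthant \<longrightarrow> g (\<chi> i. x $ p i) = g x)"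

end

theory Submission
  imports Defs
begin

(* Smoothness, homogeneity and the positivity of the partial derivatives of f follow from the
   chain rule. Concavity holds because a concave, coordinatewise nondecreasing function of
   concave functions is concave. For inverse-concavity write f*(x) = phi*(h(x)) with
   h_j(x) = 1 / f_j(1/x): phi* is concave and nondecreasing, and each h_j is concave, since a
   positive 1-homogeneous function k with -1/k concave is superadditive (the set {k >= 1} is
   convex), hence concave. *)

lemma open_pos_orthant: "open (pos_orthant :: (real^'n) set)"
proof -
  have "pos_orthant = (\<Inter>i. {x::real^'n. x $ i > 0})"
    by (auto simp: pos_orthant_def)
  then show ?thesis
    unfolding \<open>pos_orthant = _\<close> by (auto intro!: open_INT open_Collect_less continuous_intros)
qed

lemma convex_pos_orthant: "convex (pos_orthant :: (real^'n) set)"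
  unfolding convex_def pos_orthant_def
  by clarsimp (metis add.commute add_0 add_pos_nonneg add_nonneg_pos less_eq_real_def mult_eq_0_iff mult_nonneg_nonneg mult_pos_pos zero_less_one)

lemma scaleR_pos_orthant: "c > 0 \<Longrightarrow> x \<in> pos_orthant \<Longrightarrow> c *\<^sub>R x \<in> pos_orthant"
  by (simp add: pos_orthant_def)

lemma inverse_pos_orthant: "x \<in> pos_orthant \<Longrightarrow> (\<chi> i. inverse (x $ i)) \<in> pos_orthant"
  by (simp add: pos_orthant_def)

section \<open>Derivatives of compositions with vector-valued maps\<close>

lemma vec_lambda_eq_sum_axis: "(\<chi> j. g j) = (\<Sum>j\<in>UNIV. g j *\<^sub>R (axis j 1 :: real^'k))"
  using basis_expansion[of "\<chi> j. g j"] by (simp add: scalar_mult_eq_scaleR)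

lemma linear_vec_eq_sum_axis:
  fixes L :: "real^'k \<Rightarrow> 'b::real_vector"
  assumes "linear L"
  shows "L v = (\<Sum>j\<in>UNIV. v $ j *\<^sub>R L (axis j 1))"
proof -
  have "L v = L (\<Sum>j\<in>UNIV. v $ j *\<^sub>R axis j 1)"
    using vec_lambda_eq_sum_axis[of "($) v"] by simp
  then show ?thesis
    using assms by (simp add: linear_sum linear_scale)
qed

lemma has_derivative_vec_lambda:
  fixes f :: "'k::finite \<Rightarrow> 'a::real_normed_vector \<Rightarrow> real"
  assumes "\<And>j. (f j has_derivative f' j) F"
  shows "((\<lambda>x. \<chi> j. f j x) has_derivative (\<lambda>v. \<chi> j. f' j v)) F"
proof -
  have "((\<lambda>x. \<Sum>j\<in>UNIV. f j x *\<^sub>R (axis j 1 :: real^'k)) has_derivative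
        (\<lambda>v. \<Sum>j\<in>UNIV. f' j v *\<^sub>R axis j 1)) F"
    by (intro has_derivative_sum has_derivative_scaleR_left assms)
  then show ?thesis
    by (simp only: vec_lambda_eq_sum_axis[symmetric])
qed

lemma partial_deriv_cong_open:
  assumes "open S" "x \<in> S" "\<And>y. y \<in> S \<Longrightarrow> g y = h y"
  shows "partial_deriv g i x = partial_deriv h i x"
proof -
  have "(g has_derivative D) (at x) \<longleftrightarrow> (h has_derivative D) (at x)" for D
    using has_derivative_transform_within_open[OF _ assms(1,2)] assms(3) by metis
  then show ?thesis
    unfolding partial_deriv_def frechet_derivative_def by simp
qed

lemma partial_deriv_add:
  assumes "f differentiable (at x)" "g differentiable (at x)"
  shows "partial_deriv (\<lambda>x. f x + g x) i x = partial_deriv f i x + partial_deriv g i x"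
proof -
  have "((\<lambda>x. f x + g x) has_derivative
        (\<lambda>v. frechet_derivative f (at x) v + frechet_derivative g (at x) v)) (at x)"
    using assms frechet_derivative_works has_derivative_add by blast
  then show ?thesis
    unfolding partial_deriv_def by (simp flip: frechet_derivative_at)
qed

lemma partial_deriv_mult:
  assumes "f differentiable (at x)" "g differentiable (at x)"
  shows "partial_deriv (\<lambda>x. f x * g x) i x = f x * partial_deriv g i x + partial_deriv f i x * g x"
proof -
  have "((\<lambda>x. f x * g x) has_derivative
        (\<lambda>v. f x * frechet_derivative g (at x) v + frechet_derivative f (at x) v * g x)) (at x)"
    using assms frechet_derivative_works has_derivative_mult by blast
  then show ?thesis
    unfolding partial_deriv_def by (simp flip: frechet_derivative_at)
qed

lemma has_derivative_compose_vec_lambda: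
  fixes f :: "'k::finite \<Rightarrow> real^'n \<Rightarrow> real" and \<psi> :: "real^'k \<Rightarrow> real"
  assumes "\<psi> differentiable (at (\<chi> j. f j x))" "\<And>j. f j differentiable (at x)"
  shows "((\<lambda>x. \<psi> (\<chi> j. f j x)) has_derivative
          (\<lambda>v. \<Sum>j\<in>UNIV. partial_deriv \<psi> j (\<chi> j. f j x) * frechet_derivative (f j) (at x) v)) (at x)"
proof -
  let ?D\<psi> = "frechet_derivative \<psi> (at (\<chi> j. f j x))"
  have D\<psi>: "(\<psi> has_derivative ?D\<psi>) (at (\<chi> j. f j x))"
    using assms(1) frechet_derivative_works by blast
  have "((\<lambda>x. \<chi> j. f j x) has_derivative (\<lambda>v. \<chi> j. frechet_derivative (f j) (at x) v)) (at x)"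
    by (intro has_derivative_vec_lambda) (metis assms(2) frechet_derivative_works)
  from diff_chain_at[OF this D\<psi>]
  have "((\<lambda>x. \<psi> (\<chi> j. f j x)) has_derivative
         (\<lambda>v. ?D\<psi> (\<chi> j. frechet_derivative (f j) (at x) v))) (at x)"
    by (simp add: o_def)
  moreover have "?D\<psi> w = (\<Sum>j\<in>UNIV. partial_deriv \<psi> j (\<chi> j. f j x) * w $ j)" for w
    using linear_vec_eq_sum_axis[OF has_derivative_linear[OF D\<psi>], of w]
    by (simp add: partial_deriv_def mult.commute)
  ultimately show ?thesis
    by simp
qed

lemma differentiable_compose_vec_lambda:
  fixes f :: "'k::finite \<Rightarrow> real^'n \<Rightarrow> real" and \<psi> :: "real^'k \<Rightarrow> real"
  assumes "\<psi> differentiable (at (\<chi> j. f j x))" "\<And>j. f j differentiable (at x)"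
  shows "(\<lambda>x. \<psi> (\<chi> j. f j x)) differentiable (at x)"
  using has_derivative_compose_vec_lambda[OF assms] by (rule differentiableI)

lemma partial_deriv_compose_vec_lambda:
  fixes f :: "'k::finite \<Rightarrow> real^'n \<Rightarrow> real" and \<psi> :: "real^'k \<Rightarrow> real"
  assumes "\<psi> differentiable (at (\<chi> j. f j x))" "\<And>j. f j differentiable (at x)"
  shows "partial_deriv (\<lambda>x. \<psi> (\<chi> j. f j x)) i x =
         (\<Sum>j\<in>UNIV. partial_deriv \<psi> j (\<chi> j. f j x) * partial_deriv (f j) i x)"
  unfolding partial_deriv_def
    frechet_derivative_at[OF has_derivative_compose_vec_lambda[OF assms], symmetric]
  by simp

section \<open>Closure properties of the classes C^m\<close>

lemma ck_on_cong:
  assumes "open S" "\<And>y. y \<in> S \<Longrightarrow> g y = h y"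
  shows "ck_on m S g = ck_on m S h"
  using assms(2)
proof (induction m arbitrary: g h)
  case 0
  then show ?case
    using continuous_on_cong by auto
next
  case (Suc m)
  have "g differentiable (at x) \<longleftrightarrow> h differentiable (at x)" if "x \<in> S" for x
    unfolding differentiable_def
    using has_derivative_transform_within_open[OF _ assms(1) that] Suc.prems by metis
  moreover have "ck_on m S (partial_deriv g i) = ck_on m S (partial_deriv h i)" for i
    by (rule Suc.IH) (use partial_deriv_cong_open[OF assms(1)] Suc.prems in metis)
  ultimately show ?case
    by auto
qed

lemma ck_on_SucD: "ck_on (Suc m) S g \<Longrightarrow> ck_on m S g"
proof (induction m arbitrary: g)
  case 0
  then show ?case
    by (auto intro!: continuous_at_imp_continuous_on differentiable_imp_continuous_within)
next
  case (Suc m)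
  then show ?case
    by auto
qed

lemma ck_on_const: "ck_on m (S :: (real^'n) set) (\<lambda>x. c)"
proof (induction m arbitrary: c)
  case 0
  then show ?case
    by simp
next
  case (Suc m)
  have "partial_deriv (\<lambda>x. c) i = (\<lambda>x::real^'n. 0)" for i
    by (simp add: partial_deriv_def fun_eq_iff)
  with Suc.IH show ?case
    by simp
qed

lemma ck_on_add:
  assumes "open S" "ck_on m S f" "ck_on m S g"
  shows "ck_on m S (\<lambda>x. f x + g x)"
  using assms(2,3)
proof (induction m arbitrary: f g)
  case 0
  then show ?case
    by (auto intro: continuous_on_add)
next
  case (Suc m)
  have "ck_on m S (partial_deriv (\<lambda>x. f x + g x) i) \<longleftrightarrow>
        ck_on m S (\<lambda>x. partial_deriv f i x + partial_deriv g i x)" for i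
    using Suc.prems by (intro ck_on_cong[OF assms(1)]) (auto intro: partial_deriv_add)
  with Suc show ?case
    by auto
qed

lemma ck_on_sum:
  assumes "open S" "finite A" "\<And>j. j \<in> A \<Longrightarrow> ck_on m S (f j)"
  shows "ck_on m S (\<lambda>x. \<Sum>j\<in>A. f j x)"
  using assms(2,3)
proof (induction A rule: finite_induct)
  case empty
  then show ?case
    using ck_on_const[of m S 0] by simp
next
  case (insert a A)
  then show ?case
    using ck_on_add[OF assms(1), of m "f a" "\<lambda>x. \<Sum>j\<in>A. f j x"] by simp
qed

lemma ck_on_mult:
  assumes "open S" "ck_on m S f" "ck_on m S g"
  shows "ck_on m S (\<lambda>x. f x * g x)"
  using assms(2,3)
proof (induction m arbitrary: f g)
  case 0
  then show ?case
    by (auto intro: continuous_on_mult)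
next
  case (Suc m)
  have "ck_on m S (partial_deriv (\<lambda>x. f x * g x) i) \<longleftrightarrow>
        ck_on m S (\<lambda>x. f x * partial_deriv g i x + partial_deriv f i x * g x)" for i
    using Suc.prems by (intro ck_on_cong[OF assms(1)]) (auto intro: partial_deriv_mult)
  moreover have "ck_on m S (\<lambda>x. f x * partial_deriv g i x + partial_deriv f i x * g x)" for i
    using Suc.prems ck_on_SucD[OF Suc.prems(1)] ck_on_SucD[OF Suc.prems(2)]
    by (intro ck_on_add[OF assms(1)] Suc.IH) auto
  ultimately show ?case
    using Suc.prems by auto
qed

lemma ck_on_compose_vec_lambda:
  fixes f :: "'k::finite \<Rightarrow> real^'n \<Rightarrow> real" and \<psi> :: "real^'k \<Rightarrow> real"
  assumes "open S" "open U" "\<And>x. x \<in> S \<Longrightarrow> (\<chi> j. f j x) \<in> U"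
    and "ck_on m U \<psi>" "\<And>j. ck_on m S (f j)"
  shows "ck_on m S (\<lambda>x. \<psi> (\<chi> j. f j x))"
  using assms(4,5)
proof (induction m arbitrary: \<psi>)
  case 0
  then have "continuous_on S (\<lambda>x. \<chi> j. f j x)"
    by (auto intro: continuous_on_vec_lambda)
  with 0 show ?case
    using assms(3) by (auto intro: continuous_on_compose2)
next
  case (Suc m)
  have d\<psi>: "\<psi> differentiable (at y)" if "y \<in> U" for y
    using Suc.prems that by simp
  have df: "f j differentiable (at x)" if "x \<in> S" for x j
    using Suc.prems that by simp
  have "ck_on m S (partial_deriv (\<lambda>x. \<psi> (\<chi> j. f j x)) i) \<longleftrightarrow>
        ck_on m S (\<lambda>x. \<Sum>j\<in>UNIV. partial_deriv \<psi> j (\<chi> j. f j x) * partial_deriv (f j) i x)" for i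
    using d\<psi> df assms(3)
    by (intro ck_on_cong[OF assms(1)] partial_deriv_compose_vec_lambda) auto
  moreover have "ck_on m S (\<lambda>x. \<Sum>j\<in>UNIV. partial_deriv \<psi> j (\<chi> j. f j x) * partial_deriv (f j) i x)" for i
    using Suc.prems ck_on_SucD[OF Suc.prems(2)]
    by (intro ck_on_sum[OF assms(1)] finite_UNIV ck_on_mult[OF assms(1)] Suc.IH) auto
  moreover have "(\<lambda>x. \<psi> (\<chi> j. f j x)) differentiable (at x)" if "x \<in> S" for x
    using d\<psi> df assms(3) that by (intro differentiable_compose_vec_lambda) auto
  ultimately show ?case
    by simp
qed

lemma smooth_on_compose_vec_lambda:
  fixes f :: "'k::finite \<Rightarrow> real^'n \<Rightarrow> real" and \<psi> :: "real^'k \<Rightarrow> real"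
  assumes "open S" "open U" "\<And>x. x \<in> S \<Longrightarrow> (\<chi> j. f j x) \<in> U"
    and "smooth_on U \<psi>" "\<And>j. smooth_on S (f j)"
  shows "smooth_on S (\<lambda>x. \<psi> (\<chi> j. f j x))"
  using assms ck_on_compose_vec_lambda unfolding smooth_on_def by metis

section \<open>Monotonicity from positive partial derivatives\<close>

lemma has_real_derivative_along_line:
  fixes \<psi> :: "real^'k \<Rightarrow> real"
  assumes "\<psi> differentiable (at (y + t *\<^sub>R v))"
  shows "((\<lambda>s. \<psi> (y + s *\<^sub>R v)) has_real_derivative
          (\<Sum>j\<in>UNIV. v $ j * partial_deriv \<psi> j (y + t *\<^sub>R v))) (at t)"
proof -
  let ?D\<psi> = "frechet_derivative \<psi> (at (y + t *\<^sub>R v))"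
  have D\<psi>: "(\<psi> has_derivative ?D\<psi>) (at (y + t *\<^sub>R v))"
    using assms frechet_derivative_works by blast
  have "((\<lambda>s. y + s *\<^sub>R v) has_derivative (\<lambda>s. s *\<^sub>R v)) (at t)"
    by (auto intro!: derivative_eq_intros)
  from diff_chain_at[OF this D\<psi>]
  have "((\<lambda>s. \<psi> (y + s *\<^sub>R v)) has_derivative (\<lambda>s. ?D\<psi> (s *\<^sub>R v))) (at t)"
    by (simp add: o_def)
  moreover have "(\<lambda>s. ?D\<psi> (s *\<^sub>R v)) = (*) (\<Sum>j\<in>UNIV. v $ j * partial_deriv \<psi> j (y + t *\<^sub>R v))"
  proof
    fix s
    show "?D\<psi> (s *\<^sub>R v) = (\<Sum>j\<in>UNIV. v $ j * partial_deriv \<psi> j (y + t *\<^sub>R v)) * s"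
      using linear_vec_eq_sum_axis[OF has_derivative_linear[OF D\<psi>], of "s *\<^sub>R v"]
      by (simp add: partial_deriv_def sum_distrib_left mult_ac)
  qed
  ultimately show ?thesis
    unfolding has_field_derivative_def by simp
qed

lemma has_real_derivative_along_segment:
  fixes \<psi> :: "real^'k \<Rightarrow> real"
  assumes "convex S" "\<And>x. x \<in> S \<Longrightarrow> \<psi> differentiable (at x)"
    and "y \<in> S" "z \<in> S" "0 \<le> t" "t \<le> 1"
  shows "y + t *\<^sub>R (z - y) \<in> S"
    and "((\<lambda>s. \<psi> (y + s *\<^sub>R (z - y))) has_real_derivative
          (\<Sum>j\<in>UNIV. (z $ j - y $ j) * partial_deriv \<psi> j (y + t *\<^sub>R (z - y)))) (at t)"
proof -
  have "y + t *\<^sub>R (z - y) = (1 - t) *\<^sub>R y + t *\<^sub>R z"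
    by (simp add: algebra_simps)
  then show S: "y + t *\<^sub>R (z - y) \<in> S"
    using assms(1,3-6) unfolding convex_alt by simp
  show "((\<lambda>s. \<psi> (y + s *\<^sub>R (z - y))) has_real_derivative
          (\<Sum>j\<in>UNIV. (z $ j - y $ j) * partial_deriv \<psi> j (y + t *\<^sub>R (z - y)))) (at t)"
    using has_real_derivative_along_line[OF assms(2)[OF S]] by simp
qed

lemma partial_deriv_nonneg_imp_mono:
  fixes \<psi> :: "real^'k \<Rightarrow> real"
  assumes "convex S" "\<And>x. x \<in> S \<Longrightarrow> \<psi> differentiable (at x)"
    and "\<And>x j. x \<in> S \<Longrightarrow> partial_deriv \<psi> j x \<ge> 0"
    and "y \<in> S" "z \<in> S" "\<forall>j. y $ j \<le> z $ j"
  shows "\<psi> y \<le> \<psi> z"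
proof -
  have "\<psi> (y + 0 *\<^sub>R (z - y)) \<le> \<psi> (y + 1 *\<^sub>R (z - y))"
  proof (rule DERIV_nonneg_imp_nondecreasing[of 0 1])
    fix t :: real
    assume "0 \<le> t" "t \<le> 1"
    note segment = has_real_derivative_along_segment[OF assms(1,2,4,5) this]
    have "0 \<le> (\<Sum>j\<in>UNIV. (z $ j - y $ j) * partial_deriv \<psi> j (y + t *\<^sub>R (z - y)))"
      using assms(3)[OF segment(1)] assms(6) by (intro sum_nonneg mult_nonneg_nonneg) auto
    with segment(2) show "\<exists>d. ((\<lambda>s. \<psi> (y + s *\<^sub>R (z - y))) has_real_derivative d) (at t) \<and> 0 \<le> d"
      by blast
  qed simp
  then show ?thesis
    by simp
qed

lemma partial_deriv_pos_imp_strict_mono: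
  fixes \<psi> :: "real^'k \<Rightarrow> real"
  assumes "convex S" "\<And>x. x \<in> S \<Longrightarrow> \<psi> differentiable (at x)"
    and "\<And>x j. x \<in> S \<Longrightarrow> partial_deriv \<psi> j x > 0"
    and "y \<in> S" "z \<in> S" "\<forall>j. y $ j < z $ j"
  shows "\<psi> y < \<psi> z"
proof -
  have "\<psi> (y + 0 *\<^sub>R (z - y)) < \<psi> (y + 1 *\<^sub>R (z - y))"
  proof (rule DERIV_pos_imp_increasing[of 0 1])
    fix t :: real
    assume "0 \<le> t" "t \<le> 1"
    note segment = has_real_derivative_along_segment[OF assms(1,2,4,5) this]
    have "0 < (\<Sum>j\<in>UNIV. (z $ j - y $ j) * partial_deriv \<psi> j (y + t *\<^sub>R (z - y)))"
      using assms(3)[OF segment(1)] assms(6) by (intro sum_pos mult_pos_pos) auto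
    with segment(2) show "\<exists>d. ((\<lambda>s. \<psi> (y + s *\<^sub>R (z - y))) has_real_derivative d) (at t) \<and> 0 < d"
      by blast
  qed simp
  then show ?thesis
    by simp
qed

lemma class_C_differentiable: "class_C g \<Longrightarrow> x \<in> pos_orthant \<Longrightarrow> g differentiable (at x)"
  unfolding class_C_def smooth_on_def by (metis ck_on.simps(2))

lemma class_C_mono:
  assumes "class_C g" "y \<in> pos_orthant" "z \<in> pos_orthant" "\<forall>j. y $ j \<le> z $ j"
  shows "g y \<le> g z"
  using assms class_C_differentiable convex_pos_orthant
  by (intro partial_deriv_nonneg_imp_mono[where S = pos_orthant])
     (auto simp: class_C_def less_imp_le)

lemma class_C_pos:
  assumes "class_C g" "x \<in> pos_orthant"
  shows "g x > 0"
proof -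
  have "g x < g (2 *\<^sub>R x)"
    using assms class_C_differentiable convex_pos_orthant
    by (intro partial_deriv_pos_imp_strict_mono[where S = pos_orthant])
       (auto simp: class_C_def pos_orthant_def)
  also have "\<dots> = 2 * g x"
    using assms unfolding class_C_def by simp
  finally show ?thesis
    by simp
qed

section \<open>Concavity and inverse-concavity\<close>

lemma concave_on_compose_mono:
  fixes \<psi> :: "real^'k \<Rightarrow> real" and f :: "'k::finite \<Rightarrow> 'a::real_vector \<Rightarrow> real"
  assumes "convex S" "concave_on U \<psi>"
    and mono: "\<And>y z. y \<in> U \<Longrightarrow> z \<in> U \<Longrightarrow> \<forall>j. y $ j \<le> z $ j \<Longrightarrow> \<psi> y \<le> \<psi> z"
    and "\<And>j. concave_on S (f j)" "\<And>x. x \<in> S \<Longrightarrow> (\<chi> j. f j x) \<in> U"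
  shows "concave_on S (\<lambda>x. \<psi> (\<chi> j. f j x))"
  unfolding concave_on_iff
proof (intro conjI assms(1) ballI allI impI)
  fix x y :: 'a and u v :: real
  assume xy: "x \<in> S" "y \<in> S" and uv: "u \<ge> 0" "v \<ge> 0" "u + v = 1"
  let ?w = "u *\<^sub>R (\<chi> j. f j x) + v *\<^sub>R (\<chi> j. f j y)"
  have "convex U"
    using assms(2) concave_on_iff by blast
  then have "?w \<in> U"
    using assms(5) xy uv unfolding convex_def by blast
  moreover have "u *\<^sub>R x + v *\<^sub>R y \<in> S"
    using assms(1) xy uv unfolding convex_def by blast
  moreover have "\<forall>j. ?w $ j \<le> f j (u *\<^sub>R x + v *\<^sub>R y)"
    using assms(4) xy uv unfolding concave_on_iff by simp
  ultimately have "\<psi> ?w \<le> \<psi> (\<chi> j. f j (u *\<^sub>R x + v *\<^sub>R y))"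
    using assms(5) by (intro mono) auto
  moreover have "u * \<psi> (\<chi> j. f j x) + v * \<psi> (\<chi> j. f j y) \<le> \<psi> ?w"
    using assms(2,5) xy uv unfolding concave_on_iff by blast
  ultimately show "u * \<psi> (\<chi> j. f j x) + v * \<psi> (\<chi> j. f j y) \<le> \<psi> (\<chi> j. f j (u *\<^sub>R x + v *\<^sub>R y))"
    by linarith
qed

lemma superadditive_if_concave_neg_inverse:
  fixes k :: "'a::real_vector \<Rightarrow> real"
  assumes cone: "\<And>c x. c > 0 \<Longrightarrow> x \<in> S \<Longrightarrow> c *\<^sub>R x \<in> S"
    and hom: "\<And>c x. c > 0 \<Longrightarrow> x \<in> S \<Longrightarrow> k (c *\<^sub>R x) = c * k x"
    and pos: "\<And>x. x \<in> S \<Longrightarrow> k x > 0"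
    and conc: "concave_on S (\<lambda>x. - inverse (k x))"
    and "x \<in> S" "y \<in> S"
  shows "k x + k y \<le> k (x + y)"
proof -
  define a b where "a = k x" and "b = k y"
  have "a > 0" "b > 0"
    using pos assms(5,6) by (auto simp: a_def b_def)
  define x' y' where "x' = inverse a *\<^sub>R x" and "y' = inverse b *\<^sub>R y"
  have S: "x' \<in> S" "y' \<in> S"
    using cone \<open>a > 0\<close> \<open>b > 0\<close> assms(5,6) by (auto simp: x'_def y'_def)
  have "k x' = 1" "k y' = 1"
    using hom \<open>a > 0\<close> \<open>b > 0\<close> assms(5,6) by (auto simp: x'_def y'_def a_def b_def)
  \<comment> \<open>\<open>x'\<close> and \<open>y'\<close> lie on the level set \<open>k = 1\<close>, and their convex
    combination \<open>z\<close> is \<open>(x + y) / (k x + k y)\<close>.\<close>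
  define t where "t = b / (a + b)"
  have "0 \<le> t" "t \<le> 1"
    using \<open>a > 0\<close> \<open>b > 0\<close> by (auto simp: t_def)
  define z where "z = (1 - t) *\<^sub>R x' + t *\<^sub>R y'"
  have z: "z = inverse (a + b) *\<^sub>R (x + y)"
    using \<open>a > 0\<close> \<open>b > 0\<close> by (simp add: z_def t_def x'_def y'_def field_simps scaleR_add_right)
  have "convex S"
    using conc concave_on_iff by blast
  then have "z \<in> S"
    using S \<open>0 \<le> t\<close> \<open>t \<le> 1\<close> unfolding z_def convex_alt by blast
  have "(1 - t) * - inverse (k x') + t * - inverse (k y') \<le> - inverse (k z)"
    unfolding z_def using concave_onD[OF conc \<open>0 \<le> t\<close> \<open>t \<le> 1\<close> S] .
  then have "1 \<le> k z"
    using \<open>k x' = 1\<close> \<open>k y' = 1\<close> pos[OF \<open>z \<in> S\<close>] by (simp add: field_simps)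
  have "k (x + y) = (a + b) * k z"
    using hom[OF _ \<open>z \<in> S\<close>, of "a + b"] \<open>a > 0\<close> \<open>b > 0\<close> by (simp add: z)
  also have "\<dots> \<ge> a + b"
    using \<open>1 \<le> k z\<close> \<open>a > 0\<close> \<open>b > 0\<close> by simp
  finally show ?thesis
    by (simp add: a_def b_def)
qed

lemma concave_on_if_superadditive:
  fixes k :: "'a::real_vector \<Rightarrow> real"
  assumes "convex S"
    and cone: "\<And>c x. c > 0 \<Longrightarrow> x \<in> S \<Longrightarrow> c *\<^sub>R x \<in> S"
    and hom: "\<And>c x. c > 0 \<Longrightarrow> x \<in> S \<Longrightarrow> k (c *\<^sub>R x) = c * k x"
    and superadd: "\<And>x y. x \<in> S \<Longrightarrow> y \<in> S \<Longrightarrow> k x + k y \<le> k (x + y)"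
  shows "concave_on S k"
  unfolding concave_on_iff
proof (intro conjI assms(1) ballI allI impI)
  fix x y :: 'a and u v :: real
  assume xy: "x \<in> S" "y \<in> S" and uv: "u \<ge> 0" "v \<ge> 0" "u + v = 1"
  show "u * k x + v * k y \<le> k (u *\<^sub>R x + v *\<^sub>R y)"
  proof (cases "u = 0 \<or> v = 0")
    case True
    with uv show ?thesis
      by auto
  next
    case False
    with uv have "u > 0" "v > 0"
      by auto
    then show ?thesis
      using superadd[of "u *\<^sub>R x" "v *\<^sub>R y"] cone hom xy by simp
  qed
qed

lemma class_C_reciprocal_concave:
  assumes "class_C g"
  shows "concave_on pos_orthant (\<lambda>x. inverse (g (\<chi> i. inverse (x $ i))))"
proof (rule concave_on_if_superadditive[OF convex_pos_orthant scaleR_pos_orthant])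
  have g: "\<And>c x. c > 0 \<Longrightarrow> x \<in> pos_orthant \<Longrightarrow> g (c *\<^sub>R x) = c * g x"
    "concave_on pos_orthant (\<lambda>x. - g (\<chi> i. inverse (x $ i)))"
    using assms unfolding class_C_def by blast+
  have inverse_scaleR: "(\<chi> i. inverse ((c *\<^sub>R x) $ i)) = inverse c *\<^sub>R (\<chi> i. inverse (x $ i))"
    for c :: real and x :: "real^'a"
    by (simp add: vec_eq_iff)
  show hom: "inverse (g (\<chi> i. inverse ((c *\<^sub>R x) $ i))) = c * inverse (g (\<chi> i. inverse (x $ i)))"
    if "c > 0" "x \<in> pos_orthant" for c x
  proof -
    have "g (\<chi> i. inverse ((c *\<^sub>R x) $ i)) = g (inverse c *\<^sub>R (\<chi> i. inverse (x $ i)))"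
      by (simp only: inverse_scaleR)
    also have "\<dots> = inverse c * g (\<chi> i. inverse (x $ i))"
      using that by (intro g(1) inverse_pos_orthant) auto
    finally show ?thesis
      by simp
  qed
  show "inverse (g (\<chi> i. inverse (x $ i))) + inverse (g (\<chi> i. inverse (y $ i)))
        \<le> inverse (g (\<chi> i. inverse ((x + y) $ i)))"
    if "x \<in> pos_orthant" "y \<in> pos_orthant" for x y
    using that g(2) class_C_pos[OF assms] inverse_pos_orthant scaleR_pos_orthant hom
    by (intro superadditive_if_concave_neg_inverse[where S = pos_orthant]) auto
qed

lemma class_C_compose_inverse_concave:
  fixes f :: "'k::finite \<Rightarrow> real^'n \<Rightarrow> real" and \<phi> :: "real^'k \<Rightarrow> real"
  assumes f: "\<And>j. class_C (f j)" and \<phi>: "class_C \<phi>"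
  shows "concave_on pos_orthant (\<lambda>x. - \<phi> (\<chi> j. f j (\<chi> i. inverse (x $ i))))"
proof -
  have "concave_on pos_orthant
          (\<lambda>x. (\<lambda>y. - \<phi> (\<chi> j. inverse (y $ j))) (\<chi> j. inverse (f j (\<chi> i. inverse (x $ i)))))"
  proof (rule concave_on_compose_mono[OF convex_pos_orthant, where U = pos_orthant
        and \<psi> = "\<lambda>y. - \<phi> (\<chi> j. inverse (y $ j))" and f = "\<lambda>j x. inverse (f j (\<chi> i. inverse (x $ i)))"])
    show "concave_on pos_orthant (\<lambda>y. - \<phi> (\<chi> j. inverse (y $ j)))"
      using \<phi> unfolding class_C_def by blast
    show "- \<phi> (\<chi> j. inverse (y $ j)) \<le> - \<phi> (\<chi> j. inverse (z $ j))"
      if "y \<in> pos_orthant" "z \<in> pos_orthant" "\<forall>j. y $ j \<le> z $ j" for y z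
      using that class_C_mono[OF \<phi> inverse_pos_orthant inverse_pos_orthant]
      by (simp add: pos_orthant_def le_imp_inverse_le)
    show "concave_on pos_orthant (\<lambda>x. inverse (f j (\<chi> i. inverse (x $ i))))" for j
      by (rule class_C_reciprocal_concave[OF f])
    show "(\<chi> j. inverse (f j (\<chi> i. inverse (x $ i)))) \<in> pos_orthant" if "x \<in> pos_orthant" for x
      using class_C_pos[OF f inverse_pos_orthant[OF that]] by (simp add: pos_orthant_def)
  qed
  then show ?thesis
    by simp
qed

lemma class_C_compose:
  fixes f :: "'k::finite \<Rightarrow> real^'n \<Rightarrow> real" and \<phi> :: "real^'k \<Rightarrow> real"
  assumes f: "\<And>j. class_C (f j)" and \<phi>: "class_C \<phi>"
  shows "class_C (\<lambda>x. \<phi> (\<chi> j. f j x))"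
proof -
  have F: "(\<chi> j. f j x) \<in> pos_orthant" if "x \<in> pos_orthant" for x
    using class_C_pos[OF f that] by (simp add: pos_orthant_def)
  have "smooth_on pos_orthant (\<lambda>x. \<phi> (\<chi> j. f j x))"
    using f \<phi> F unfolding class_C_def
    by (intro smooth_on_compose_vec_lambda[OF open_pos_orthant open_pos_orthant]) auto
  moreover have "\<phi> (\<chi> j. f j (c *\<^sub>R x)) = c * \<phi> (\<chi> j. f j x)" if "c > 0" "x \<in> pos_orthant" for c x
  proof -
    have "(\<chi> j. f j (c *\<^sub>R x)) = c *\<^sub>R (\<chi> j. f j x)"
      using f that by (simp add: class_C_def vec_eq_iff)
    then show ?thesis
      using \<phi> that F unfolding class_C_def by simp
  qed
  moreover have "partial_deriv (\<lambda>x. \<phi> (\<chi> j. f j x)) i x > 0" if "x \<in> pos_orthant" for i x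
  proof -
    have "partial_deriv (\<lambda>x. \<phi> (\<chi> j. f j x)) i x =
          (\<Sum>j\<in>UNIV. partial_deriv \<phi> j (\<chi> j. f j x) * partial_deriv (f j) i x)"
      using that F by (intro partial_deriv_compose_vec_lambda class_C_differentiable f \<phi>)
    also have "\<dots> > 0"
      using f \<phi> that F by (intro sum_pos mult_pos_pos) (auto simp: class_C_def)
    finally show ?thesis .
  qed
  moreover have "concave_on pos_orthant (\<lambda>x. \<phi> (\<chi> j. f j x))"
    using f \<phi> F class_C_mono[OF \<phi>] unfolding class_C_def
    by (intro concave_on_compose_mono[OF convex_pos_orthant, where U = pos_orthant]) auto
  moreover have "concave_on pos_orthant (\<lambda>x. - \<phi> (\<chi> j. f j (\<chi> i. inverse (x $ i))))"
    using f \<phi> by (rule class_C_compose_inverse_concave)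
  ultimately show ?thesis
    unfolding class_C_def by blast
qed

theorem theorem2p7:
  fixes fs :: "'k::finite \<Rightarrow> (real ^ 'n \<Rightarrow> real)"
    and \<phi> :: "real ^ 'k \<Rightarrow> real"
  assumes "\<And>j. class_C (fs j)"
    and "class_C \<phi>"
  shows "class_C (\<lambda>x. \<phi> (\<chi> j. fs j x))
         \<and> ((\<forall>j. class_S (fs j)) \<longrightarrow> class_S (\<lambda>x. \<phi> (\<chi> j. fs j x)))"
proof -
  have C: "class_C (\<lambda>x. \<phi> (\<chi> j. fs j x))"
    using assms by (rule class_C_compose)
  moreover have "class_S (\<lambda>x. \<phi> (\<chi> j. fs j x))" if "\<forall>j. class_S (fs j)"
    using that C unfolding class_S_def by simp
  ultimately show ?thesis
    by blast
qed

end
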